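(* In the social learning model with Gaussian signals, for every $\varepsilon>0$ there exists $k>0$ such that for all $t\ge1$, $$\mathbb{P}_+\big(a_t=-1\,\big|\,a_\tau=+1\text{ for all }\tau<t\big)>\frac{k}{t^{1+\varepsilon}}.$$
   Context: Social learning model. A state $\theta\in\{-1,+1\}$ is drawn with $\mathbb{P}(\theta=+1)=\mathbb{P}(\theta=-1)=1/2$. Agents $t=1,2,\dots$ receive private signals $s_t\in\mathbb{R}$ that are i.i.d. conditionally on $\theta$, with CDF $F_+$ if $\theta=+1$ and $F_-$ if $\theta=-1$; $F_+$ and $F_-$ are mutually absolutely continuous. Let $L_t=\log\frac{\mathbb{P}(\theta=+1\mid s_t)}{\mathbb{P}(\theta=-1\mid s_t)}$ be the private log-likelihood ratio, and let $G_+$, $G_-$ denote the CDFs of $L_t$ conditional on $\theta=+1$, $\theta=-1$ respectively. Signals are assumed unbounded: for every $M\in\mathbb{R}$, $\mathbb{P}(L_t>M)>0$ and $\mathbb{P}(L_t<-M)>0$. Agent $t$ observes $a_1,\dots,a_{t-1}$ and her own signal and chooses $a_t\in\{-1,+1\}$ (utility $1$ if $a_t=\theta$, else $0$). The public belief is $\mu_t=\mathbb{P}(\theta=+1\mid a_1,\dots,a_{t-1})$ and $\ell_t=\log\frac{\mu_t}{1-\mu_t}$ (so $\ell_1=0$). In equilibrium $a_t=+1$ iff $\ell_t+L_t>0$, and otherwise $a_t=-1$. Consequently $\ell_{t+1}=\ell_t+D_+(\ell_t)$ if $a_t=+1$ and $\ell_{t+1}=\ell_t+D_-(\ell_t)$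 if $a_t=-1$, where $D_+(x)=\log\frac{1-G_+(-x)}{1-G_-(-x)}$ and $D_-(x)=\log\frac{G_+(-x)}{G_-(-x)}$. We write $\mathbb{P}_+(\cdot)=\mathbb{P}(\cdot\mid\theta=+1)$ and $\mathbb{E}_+$ for the corresponding expectation. Gaussian signals: $F_+$ is the normal distribution with mean $+1$ and variance $\sigma^2$, and $F_-$ is the normal distribution with mean $-1$ and variance $\sigma^2$, for some $\sigma>0$. *)

theory Defs
  imports "HOL-Probability.Probability"
begin

text \<open>Gaussian social learning model with noise standard deviation sigma.
  Signal law conditional on theta = +1 / -1.\<close>

definition sig_dist :: "real \<Rightarrow> real \<Rightarrow> real measure" where
  "sig_dist m \<sigma> = density lborel (normal_density m \<sigma>)"

text \<open>Private log-likelihood ratio L = log (P(theta=+1|s) / P(theta=-1|s)), uniform prior,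
  i.e. the log of the density ratio.\<close>
definition Llr :: "real \<Rightarrow> real \<Rightarrow> real" where
  "Llr \<sigma> s = ln (((1/2) * normal_density 1 \<sigma> s) / ((1/2) * normal_density (-1) \<sigma> s))"

definition Gp :: "real \<Rightarrow> real \<Rightarrow> real" where
  "Gp \<sigma> x = measure (sig_dist 1 \<sigma>) {s \<in> space (sig_dist 1 \<sigma>). Llr \<sigma> s \<le> x}"

definition Gm :: "real \<Rightarrow> real \<Rightarrow> real" where
  "Gm \<sigma> x = measure (sig_dist (-1) \<sigma>) {s \<in> space (sig_dist (-1) \<sigma>). Llr \<sigma> s \<le> x}"

definition Dp :: "real \<Rightarrow> real \<Rightarrow> real" where
  "Dp \<sigma> x = ln ((1 - Gp \<sigma> (-x)) / (1 - Gm \<sigma> (-x)))"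

definition Dm :: "real \<Rightarrow> real \<Rightarrow> real" where
  "Dm \<sigma> x = ln (Gp \<sigma> (-x) / Gm \<sigma> (-x))"

text \<open>Signals: omega t is the private signal of agent t (t = 1, 2, ...; omega 0 is unused).
  pub_ll sigma omega t is the public log-likelihood ratio ell_t, for t >= 1; ell_1 = 0.
  (For t = 0 it is also 0, a dummy value.)\<close>
fun pub_ll :: "real \<Rightarrow> (nat \<Rightarrow> real) \<Rightarrow> nat \<Rightarrow> real" where
  "pub_ll \<sigma> \<omega> 0 = 0"
| "pub_ll \<sigma> \<omega> (Suc 0) = 0"
| "pub_ll \<sigma> \<omega> (Suc (Suc n)) =
     (let l = pub_ll \<sigma> \<omega> (Suc n) in
      if l + Llr \<sigma> (\<omega> (Suc n)) > 0 then l + Dp \<sigma> l else l + Dm \<sigma> l)"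

definition action :: "real \<Rightarrow> (nat \<Rightarrow> real) \<Rightarrow> nat \<Rightarrow> int" where
  "action \<sigma> \<omega> t = (if pub_ll \<sigma> \<omega> t + Llr \<sigma> (\<omega> t) > 0 then 1 else -1)"

definition Pplus :: "real \<Rightarrow> (nat \<Rightarrow> real) measure" where
  "Pplus \<sigma> = PiM UNIV (\<lambda>_. sig_dist 1 \<sigma>)"

definition cond_prob_first_minus :: "real \<Rightarrow> nat \<Rightarrow> real" where
  "cond_prob_first_minus \<sigma> t =
     measure (Pplus \<sigma>) {\<omega> \<in> space (Pplus \<sigma>). action \<sigma> \<omega> t = -1 \<and> (\<forall>\<tau>\<in>{1..<t}. action \<sigma> \<omega> \<tau> = 1)}
     / measure (Pplus \<sigma>) {\<omega> \<in> space (Pplus \<sigma>). \<forall>\<tau>\<in>{1..<t}. action \<sigma> \<omega> \<tau> = 1}"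

end

theory Submission
  imports Defs
begin

text \<open>With Gaussian signals the private log-likelihood ratio is \<open>2 s / \<sigma>\<^sup>2\<close>, so \<open>G+(-\<ell>)\<close> and
  \<open>G-(-\<ell>)\<close> are Gaussian lower tails at \<open>-\<sigma>\<^sup>2 \<ell> / 2\<close>. On the event that agents \<open>1, \<dots>, t - 1\<close>
  all chose \<open>+1\<close> the public belief \<open>\<ell>\<^sub>t\<close> is deterministic, and by independence of the signals
  the conditional probability in question is exactly \<open>G+(-\<ell>\<^sub>t)\<close>.
  In the variable \<open>v = \<sigma>\<^sup>2 \<ell> / 2 - 1\<close> each increment \<open>D+(\<ell>)\<close> is at most a constant times
  \<open>exp (- r v\<^sup>2)\<close>, \<open>r = 1 / (2 \<sigma>\<^sup>2)\<close>, so for every \<open>\<beta> < 1\<close> the potential \<open>exp (\<beta> r v\<^sup>2)\<close>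
  grows at most linearly in \<open>t\<close>. As \<open>G+(-\<ell>)\<close> is at least a constant times
  \<open>exp (- (1 + \<gamma>) r v\<^sup>2)\<close>, the choice \<open>\<beta> = (1 + \<gamma>) / (1 + \<epsilon>)\<close> with \<open>\<gamma> < \<epsilon>\<close> gives
  \<open>G+(-\<ell>\<^sub>t) \<ge> k / t powr (1 + \<epsilon>)\<close>.\<close>

section \<open>Gaussian tail estimates\<close>

lemma prob_space_sig_dist: "\<sigma> > 0 \<Longrightarrow> prob_space (sig_dist m \<sigma>)"
  unfolding sig_dist_def by (rule prob_space_normal_density)

lemma space_sig_dist [simp]: "space (sig_dist m \<sigma>) = UNIV"
  unfolding sig_dist_def by simp

lemma sets_sig_dist [simp]: "sets (sig_dist m \<sigma>) = sets borel"
  unfolding sig_dist_def by simp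

lemma measure_sig_dist:
  assumes "\<sigma> > 0" "A \<in> sets borel"
  shows "ennreal (measure (sig_dist m \<sigma>) A) = (\<integral>\<^sup>+x. ennreal (normal_density m \<sigma> x) * indicator A x \<partial>lborel)"
proof -
  interpret prob_space "sig_dist m \<sigma>" using assms(1) by (rule prob_space_sig_dist)
  have "emeasure (sig_dist m \<sigma>) A = (\<integral>\<^sup>+x. ennreal (normal_density m \<sigma> x) * indicator A x \<partial>lborel)"
    using assms(2) unfolding sig_dist_def by (simp add: emeasure_density)
  then show ?thesis by (simp add: emeasure_eq_measure)
qed

lemma normal_density_le_normal_density_iff:
  assumes "\<sigma> > 0"
  shows "normal_density m \<sigma> x \<le> normal_density m' \<sigma> x' \<longleftrightarrow> \<bar>x' - m'\<bar> \<le> \<bar>x - m\<bar>"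
proof -
  have "normal_density m \<sigma> x \<le> normal_density m' \<sigma> x'
      \<longleftrightarrow> - (x - m)\<^sup>2 / (2 * \<sigma>\<^sup>2) \<le> - (x' - m')\<^sup>2 / (2 * \<sigma>\<^sup>2)"
    using assms by (simp add: normal_density_def divide_le_cancel mult_less_0_iff del: minus_divide_left)
  also have "\<dots> \<longleftrightarrow> (x' - m')\<^sup>2 \<le> (x - m)\<^sup>2"
    using assms by (simp add: divide_le_cancel add_pos_pos)
  also have "\<dots> \<longleftrightarrow> \<bar>x' - m'\<bar> \<le> \<bar>x - m\<bar>"
    by (simp add: abs_le_square_iff)
  finally show ?thesis .
qed

lemma density_le_measure_sig_dist:
  assumes "\<sigma> > 0" "a \<le> b" "{a<..b} \<subseteq> A" "A \<in> sets borel" "d \<ge> 0"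
    and "\<And>x. x \<in> {a<..b} \<Longrightarrow> d \<le> normal_density m \<sigma> x"
  shows "(b - a) * d \<le> measure (sig_dist m \<sigma>) A"
proof -
  have "ennreal ((b - a) * d) = (\<integral>\<^sup>+x. ennreal d * indicator {a<..b} x \<partial>lborel)"
    using assms(2,5) by (simp add: nn_integral_cmult_indicator ennreal_mult' mult.commute)
  also have "\<dots> \<le> (\<integral>\<^sup>+x. ennreal (normal_density m \<sigma> x) * indicator A x \<partial>lborel)"
    using assms(3,6) by (intro nn_integral_mono) (auto simp: indicator_def)
  also have "\<dots> = ennreal (measure (sig_dist m \<sigma>) A)"
    using assms(1,4) by (simp add: measure_sig_dist)
  finally show ?thesis by (simp add: ennreal_le_iff)
qed

lemma sig_dist_atMost_le_exp:
  assumes "\<sigma> > 0" "c \<le> m"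
  shows "measure (sig_dist m \<sigma>) {..c} \<le> exp (- (c - m)\<^sup>2 / (2 * \<sigma>\<^sup>2))"
proof -
  let ?E = "exp (- (c - m)\<^sup>2 / (2 * \<sigma>\<^sup>2))"
  have shift: "normal_density m \<sigma> x \<le> ?E * normal_density c \<sigma> x" if "x \<le> c" for x
  proof -
    have "(c - m)\<^sup>2 + (x - c)\<^sup>2 \<le> (x - m)\<^sup>2"
      using mult_left_mono_neg[of x c "c - m"] that assms(2) by (simp add: power2_eq_square algebra_simps)
    then have "- (x - m)\<^sup>2 / (2 * \<sigma>\<^sup>2) \<le> - (c - m)\<^sup>2 / (2 * \<sigma>\<^sup>2) + - (x - c)\<^sup>2 / (2 * \<sigma>\<^sup>2)"
      using assms(1) by (simp add: field_simps)
    then show ?thesis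
      unfolding normal_density_def by (simp add: exp_add[symmetric] divide_right_mono)
  qed
  have "ennreal (measure (sig_dist m \<sigma>) {..c}) = (\<integral>\<^sup>+x. ennreal (normal_density m \<sigma> x) * indicator {..c} x \<partial>lborel)"
    using assms by (simp add: measure_sig_dist)
  also have "\<dots> \<le> (\<integral>\<^sup>+x. ennreal ?E * (ennreal (normal_density c \<sigma> x) * indicator {..c} x) \<partial>lborel)"
    using shift by (intro nn_integral_mono) (auto simp: indicator_def ennreal_mult[symmetric])
  also have "\<dots> = ennreal ?E * ennreal (measure (sig_dist c \<sigma>) {..c})"
    using assms by (simp add: nn_integral_cmult measure_sig_dist)
  also have "\<dots> \<le> ennreal ?E"
  proof -
    interpret prob_space "sig_dist c \<sigma>" using assms(1) by (rule prob_space_sig_dist)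
    show ?thesis by (simp add: mult_left_le)
  qed
  finally show ?thesis by (simp add: ennreal_le_iff)
qed

lemma sig_dist_atMost_antimono_mean:
  assumes "\<sigma> > 0" "m' \<le> m" "2 * c \<le> m + m'"
  shows "measure (sig_dist m \<sigma>) {..c} \<le> measure (sig_dist m' \<sigma>) {..c}"
proof -
  have "normal_density m \<sigma> x \<le> normal_density m' \<sigma> x" if "x \<le> c" for x
    using that assms by (simp add: normal_density_le_normal_density_iff)
  then have "(\<integral>\<^sup>+x. ennreal (normal_density m \<sigma> x) * indicator {..c} x \<partial>lborel)
      \<le> (\<integral>\<^sup>+x. ennreal (normal_density m' \<sigma> x) * indicator {..c} x \<partial>lborel)"
    by (intro nn_integral_mono) (auto simp: indicator_def)
  then show ?thesis
    using assms(1) by (simp add: measure_sig_dist[symmetric] ennreal_le_iff)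
qed

section \<open>The likelihood-ratio distributions\<close>

lemma Llr_gaussian: "\<sigma> > 0 \<Longrightarrow> Llr \<sigma> s = 2 * s / \<sigma>\<^sup>2"
proof -
  assume "\<sigma> > 0"
  then have "normal_density 1 \<sigma> s / normal_density (-1) \<sigma> s
      = exp (- (s - 1)\<^sup>2 / (2 * \<sigma>\<^sup>2)) / exp (- (s + 1)\<^sup>2 / (2 * \<sigma>\<^sup>2))"
    by (simp add: normal_density_def)
  also have "\<dots> = exp (2 * s / \<sigma>\<^sup>2)"
    using \<open>\<sigma> > 0\<close> by (simp add: exp_diff[symmetric] field_simps power2_eq_square)
  finally show ?thesis
    unfolding Llr_def by simp
qed

lemma Llr_le_iff: "\<sigma> > 0 \<Longrightarrow> Llr \<sigma> s \<le> x \<longleftrightarrow> s \<le> \<sigma>\<^sup>2 * x / 2"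
  by (simp add: Llr_gaussian field_simps)

lemma Gp_eq_measure: "\<sigma> > 0 \<Longrightarrow> Gp \<sigma> x = measure (sig_dist 1 \<sigma>) {..\<sigma>\<^sup>2 * x / 2}"
  unfolding Gp_def by (simp add: Llr_le_iff atMost_def)

lemma Gm_eq_measure: "\<sigma> > 0 \<Longrightarrow> Gm \<sigma> x = measure (sig_dist (-1) \<sigma>) {..\<sigma>\<^sup>2 * x / 2}"
  unfolding Gm_def by (simp add: Llr_le_iff atMost_def)

lemma Gp_le_Gm: "\<sigma> > 0 \<Longrightarrow> x \<le> 0 \<Longrightarrow> Gp \<sigma> x \<le> Gm \<sigma> x"
  by (simp add: Gp_eq_measure Gm_eq_measure sig_dist_atMost_antimono_mean mult_nonneg_nonpos)

lemma Gm_mono: "\<sigma> > 0 \<Longrightarrow> x \<le> y \<Longrightarrow> Gm \<sigma> x \<le> Gm \<sigma> y"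
proof -
  assume "\<sigma> > 0" "x \<le> y"
  interpret prob_space "sig_dist (-1) \<sigma>" using \<open>\<sigma> > 0\<close> by (rule prob_space_sig_dist)
  show ?thesis
    using \<open>\<sigma> > 0\<close> \<open>x \<le> y\<close> by (simp add: Gm_eq_measure finite_measure_mono)
qed

lemma Gm_zero_less_one: "\<sigma> > 0 \<Longrightarrow> Gm \<sigma> 0 < 1"
proof -
  assume "\<sigma> > 0"
  interpret prob_space "sig_dist (-1) \<sigma>" using \<open>\<sigma> > 0\<close> by (rule prob_space_sig_dist)
  have "(1 - 0) * normal_density (-1) \<sigma> 1 \<le> measure (sig_dist (-1) \<sigma>) {0<..}"
    using \<open>\<sigma> > 0\<close> by (intro density_le_measure_sig_dist) (auto simp: normal_density_le_normal_density_iff)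
  moreover have "measure (sig_dist (-1) \<sigma>) {0<..} = 1 - Gm \<sigma> 0"
    using \<open>\<sigma> > 0\<close> prob_compl[of "{..0}"]
    by (simp add: Gm_eq_measure Compl_eq_Diff_UNIV[symmetric] Compl_atMost)
  ultimately show ?thesis
    using normal_density_pos[OF \<open>\<sigma> > 0\<close>, of "-1" 1] by simp
qed

lemma Dp_bounds:
  assumes "\<sigma> > 0" "l \<ge> 0"
  shows "0 \<le> Dp \<sigma> l" "Dp \<sigma> l \<le> Gm \<sigma> (-l) / (1 - Gm \<sigma> 0)"
proof -
  have Gm_le: "Gm \<sigma> (-l) \<le> Gm \<sigma> 0" and Gm0: "Gm \<sigma> 0 < 1"
    using assms by (simp_all add: Gm_mono Gm_zero_less_one)
  have Gp_le: "Gp \<sigma> (-l) \<le> Gm \<sigma> (-l)"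
    using assms by (intro Gp_le_Gm) simp_all
  have Gp0: "0 \<le> Gp \<sigma> (-l)"
    by (simp add: Gp_def)
  have "1 \<le> (1 - Gp \<sigma> (-l)) / (1 - Gm \<sigma> (-l))"
    using Gm_le Gm0 Gp_le by simp
  then show "0 \<le> Dp \<sigma> l"
    unfolding Dp_def by simp
  have "Dp \<sigma> l \<le> (1 - Gp \<sigma> (-l)) / (1 - Gm \<sigma> (-l)) - 1"
    unfolding Dp_def using Gm_le Gm0 Gp_le by (intro ln_le_minus_one) simp
  also have "\<dots> \<le> 1 / (1 - Gm \<sigma> (-l)) - 1"
    using Gm_le Gm0 Gp0 by (simp add: divide_right_mono)
  also have "\<dots> = Gm \<sigma> (-l) / (1 - Gm \<sigma> (-l))"
    using Gm_le Gm0 by (simp add: field_simps)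
  also have "\<dots> \<le> Gm \<sigma> (-l) / (1 - Gm \<sigma> 0)"
    using Gm_le Gm0 by (intro divide_left_mono) (auto simp: Gm_def)
  finally show "Dp \<sigma> l \<le> Gm \<sigma> (-l) / (1 - Gm \<sigma> 0)" .
qed

lemma Gm_tail_le:
  assumes "\<sigma> > 0" "l \<ge> 0"
  shows "Gm \<sigma> (-l) \<le> exp ((1 - (\<sigma>\<^sup>2 * l / 2 - 1)\<^sup>2) / (2 * \<sigma>\<^sup>2))"
proof (cases "\<sigma>\<^sup>2 * l / 2 \<ge> 1")
  case True
  then have "Gm \<sigma> (-l) \<le> exp (- (\<sigma>\<^sup>2 * -l / 2 - -1)\<^sup>2 / (2 * \<sigma>\<^sup>2))"
    using assms sig_dist_atMost_le_exp[of \<sigma> "\<sigma>\<^sup>2 * -l / 2" "-1"] by (simp add: Gm_eq_measure)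
  also have "\<dots> \<le> exp ((1 - (\<sigma>\<^sup>2 * l / 2 - 1)\<^sup>2) / (2 * \<sigma>\<^sup>2))"
    using assms by (simp add: power2_commute[of 1] diff_divide_distrib)
  finally show ?thesis .
next
  case False
  interpret prob_space "sig_dist (-1) \<sigma>" using assms(1) by (rule prob_space_sig_dist)
  have "(\<sigma>\<^sup>2 * l / 2 - 1)\<^sup>2 \<le> 1"
    using False assms by (simp add: abs_square_le_1)
  then have "1 \<le> exp ((1 - (\<sigma>\<^sup>2 * l / 2 - 1)\<^sup>2) / (2 * \<sigma>\<^sup>2))"
    by simp
  moreover have "Gm \<sigma> (-l) \<le> 1"
    using assms by (simp add: Gm_eq_measure)
  ultimately show ?thesis by linarith
qed

lemma Gp_tail_ge:
  assumes "\<sigma> > 0" "l \<ge> 0"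
  shows "exp (- (\<sigma>\<^sup>2 * l / 2 + 2)\<^sup>2 / (2 * \<sigma>\<^sup>2)) / sqrt (2 * pi * \<sigma>\<^sup>2) \<le> Gp \<sigma> (-l)"
proof -
  let ?c = "\<sigma>\<^sup>2 * -l / 2"
  have "?c \<le> 0"
    using assms by (simp add: mult_nonneg_nonpos)
  then have "(?c - (?c - 1)) * normal_density 1 \<sigma> (?c - 1) \<le> measure (sig_dist 1 \<sigma>) {..?c}"
    using assms(1) by (intro density_le_measure_sig_dist) (auto simp: normal_density_le_normal_density_iff)
  moreover have "(?c - 1 - 1)\<^sup>2 = (\<sigma>\<^sup>2 * l / 2 + 2)\<^sup>2"
    by (simp add: power2_eq_square algebra_simps)
  ultimately show ?thesis
    using assms(1) by (simp add: Gp_eq_measure normal_density_def)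
qed

section \<open>A potential bound\<close>

lemma exp_diff_le: "exp y - exp x \<le> (y - x) * exp (y :: real)"
proof -
  have "exp y * (1 + (x - y)) \<le> exp y * exp (x - y)"
    using exp_ge_add_one_self[of "x - y"] by (simp add: mult_left_mono)
  then show ?thesis
    by (simp add: exp_diff algebra_simps)
qed

lemma quadratic_le_vertex:
  fixes a b c y :: real
  assumes "a > 0"
  shows "- a * y\<^sup>2 + b * y + c \<le> c + b\<^sup>2 / (4 * a)"
proof -
  have "0 \<le> a * (y - b / (2 * a))\<^sup>2"
    using assms by simp
  also have "\<dots> = a * y\<^sup>2 - b * y + b\<^sup>2 / (4 * a)"
    using assms by (simp add: power2_eq_square field_simps)
  finally show ?thesis by simp
qed

lemma square_add_le:
  fixes x c \<gamma> :: real
  assumes "\<gamma> > 0"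
  shows "(x + c)\<^sup>2 \<le> (1 + \<gamma>) * x\<^sup>2 + (1 + 1 / \<gamma>) * c\<^sup>2"
proof -
  have "0 \<le> \<gamma> * (x - c / \<gamma>)\<^sup>2"
    using assms by simp
  also have "\<dots> = \<gamma> * x\<^sup>2 - 2 * x * c + c\<^sup>2 / \<gamma>"
    using assms by (simp add: power2_eq_square field_simps)
  finally show ?thesis
    by (simp add: power2_eq_square algebra_simps)
qed

text \<open>A step of size at most \<open>M exp (- r v\<^sup>2)\<close> raises the potential \<open>exp (\<beta> r v\<^sup>2)\<close> by at most
  a polynomial in \<open>\<bar>v\<bar>\<close> times \<open>exp (- (1 - \<beta>) r v\<^sup>2)\<close>, which is bounded because \<open>\<beta> < 1\<close>.\<close>
lemma exp_square_increment_bounded: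
  fixes r \<beta> M :: real
  assumes r: "r > 0" and \<beta>: "0 < \<beta>" "\<beta> < 1" and M: "M \<ge> 0"
  shows "\<exists>B\<ge>0. \<forall>v d. 0 \<le> d \<and> d \<le> M * exp (- r * v\<^sup>2) \<longrightarrow>
           exp (\<beta> * r * (v + d)\<^sup>2) \<le> exp (\<beta> * r * v\<^sup>2) + B"
proof -
  define a b c where "a = (1 - \<beta>) * r" and "b = 2 * \<beta> * r * M + 2" and "c = \<beta> * r * M\<^sup>2 + M"
  define B where "B = \<beta> * r * M * exp (c + b\<^sup>2 / (4 * a))"
  have a: "a > 0"
    unfolding a_def using r \<beta> by simp
  have "exp (\<beta> * r * (v + d)\<^sup>2) \<le> exp (\<beta> * r * v\<^sup>2) + B"
    if d: "0 \<le> d" "d \<le> M * exp (- r * v\<^sup>2)" for v d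
  proof -
    define y where "y = \<bar>v\<bar>"
    have "exp (- r * v\<^sup>2) \<le> 1"
      using r by simp
    then have dM: "d \<le> M"
      using d(2) M by (meson mult_left_le order_trans)
    have "(v + d)\<^sup>2 - v\<^sup>2 = d * (2 * v + d)"
      by (simp add: power2_eq_square algebra_simps)
    also have "\<dots> \<le> d * (2 * y + M)"
      using d(1) dM unfolding y_def by (intro mult_left_mono) auto
    also have "\<dots> \<le> M * exp (- r * y\<^sup>2) * (2 * y + M)"
      using d M unfolding y_def by (intro mult_right_mono) auto
    finally have inc: "(v + d)\<^sup>2 - v\<^sup>2 \<le> M * exp (- r * y\<^sup>2) * (2 * y + M)" .
    have top: "(v + d)\<^sup>2 \<le> (y + M)\<^sup>2"
      using d dM M unfolding y_def by (intro power2_mono) auto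
    have "exp (\<beta> * r * (v + d)\<^sup>2) - exp (\<beta> * r * v\<^sup>2) \<le> \<beta> * r * ((v + d)\<^sup>2 - v\<^sup>2) * exp (\<beta> * r * (v + d)\<^sup>2)"
      using exp_diff_le[of "\<beta> * r * (v + d)\<^sup>2" "\<beta> * r * v\<^sup>2"] by (simp add: algebra_simps)
    also have "\<dots> \<le> \<beta> * r * (M * exp (- r * y\<^sup>2) * (2 * y + M)) * exp (\<beta> * r * (y + M)\<^sup>2)"
      using inc top r \<beta> M unfolding y_def by (intro mult_mono[OF mult_left_mono]) auto
    also have "\<dots> = \<beta> * r * M * ((2 * y + M) * exp (- r * y\<^sup>2 + \<beta> * r * (y + M)\<^sup>2))"
      by (simp only: exp_add mult_ac)
    also have "\<dots> \<le> \<beta> * r * M * (exp (2 * y + M) * exp (- r * y\<^sup>2 + \<beta> * r * (y + M)\<^sup>2))"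
      using exp_ge_add_one_self[of "2 * y + M"] r \<beta> M
      by (intro mult_left_mono mult_right_mono) (auto simp del: exp_ge_add_one_self)
    also have "\<dots> = \<beta> * r * M * exp (- a * y\<^sup>2 + b * y + c)"
      unfolding a_def b_def c_def by (simp add: exp_add[symmetric] power2_eq_square algebra_simps)
    also have "\<dots> \<le> B"
      unfolding B_def using quadratic_le_vertex[OF a, of y b c] r \<beta> M by (intro mult_left_mono) auto
    finally show ?thesis by simp
  qed
  moreover have "B \<ge> 0"
    unfolding B_def using r \<beta> M by simp
  ultimately show ?thesis by blast
qed

lemma exp_square_linear_growth:
  fixes r \<beta> M :: real and v d :: "nat \<Rightarrow> real"
  assumes r: "r > 0" and \<beta>: "0 < \<beta>" "\<beta> < 1" and M: "M \<ge> 0"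
    and step: "\<And>n. v (Suc n) = v n + d n" "\<And>n. 0 \<le> d n" "\<And>n. d n \<le> M * exp (- r * (v n)\<^sup>2)"
  shows "\<exists>B\<ge>0. \<forall>n. exp (\<beta> * r * (v n)\<^sup>2) \<le> exp (\<beta> * r * (v 0)\<^sup>2) + B * real n"
proof -
  obtain B where B: "B \<ge> 0" and inc: "\<And>v d. 0 \<le> d \<Longrightarrow> d \<le> M * exp (- r * v\<^sup>2) \<Longrightarrow>
      exp (\<beta> * r * (v + d)\<^sup>2) \<le> exp (\<beta> * r * v\<^sup>2) + B"
    using exp_square_increment_bounded[OF r \<beta> M] by blast
  have "exp (\<beta> * r * (v n)\<^sup>2) \<le> exp (\<beta> * r * (v 0)\<^sup>2) + B * real n" for n
  proof (induction n)
    case (Suc n)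
    have "exp (\<beta> * r * (v (Suc n))\<^sup>2) \<le> exp (\<beta> * r * (v n)\<^sup>2) + B"
      unfolding step(1) by (rule inc[OF step(2,3)])
    with Suc.IH show ?case
      by (simp add: algebra_simps)
  qed simp
  with B show ?thesis by blast
qed

section \<open>Public beliefs along a run of \<open>+1\<close> actions\<close>

text \<open>The public log-likelihood ratio \<open>\<ell>\<^sub>n\<^sub>+\<^sub>1\<close> on the event that agents \<open>1, \<dots>, n\<close> all chose \<open>+1\<close>.\<close>
primrec pub_ll_all_plus :: "real \<Rightarrow> nat \<Rightarrow> real" where
  "pub_ll_all_plus \<sigma> 0 = 0"
| "pub_ll_all_plus \<sigma> (Suc n) = pub_ll_all_plus \<sigma> n + Dp \<sigma> (pub_ll_all_plus \<sigma> n)"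

lemma pub_ll_all_plus_nonneg: "\<sigma> > 0 \<Longrightarrow> pub_ll_all_plus \<sigma> n \<ge> 0"
  by (induction n) (simp_all add: Dp_bounds(1))

lemma pub_ll_all_plus_potential:
  assumes "\<sigma> > 0" "0 < \<beta>" "\<beta> < 1"
  shows "\<exists>B\<ge>0. \<forall>n. exp (\<beta> / (2 * \<sigma>\<^sup>2) * (\<sigma>\<^sup>2 * pub_ll_all_plus \<sigma> n / 2 - 1)\<^sup>2)
                    \<le> exp (\<beta> / (2 * \<sigma>\<^sup>2)) + B * real n"
proof -
  define r where "r = 1 / (2 * \<sigma>\<^sup>2)"
  define v where "v n = \<sigma>\<^sup>2 * pub_ll_all_plus \<sigma> n / 2 - 1" for n
  define d where "d n = \<sigma>\<^sup>2 / 2 * Dp \<sigma> (pub_ll_all_plus \<sigma> n)" for n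
  define M where "M = \<sigma>\<^sup>2 / 2 * exp r / (1 - Gm \<sigma> 0)"
  have Gm0: "Gm \<sigma> 0 < 1"
    using assms(1) by (rule Gm_zero_less_one)
  have d_le: "d n \<le> M * exp (- r * (v n)\<^sup>2)" for n
  proof -
    have l: "pub_ll_all_plus \<sigma> n \<ge> 0"
      using assms(1) by (rule pub_ll_all_plus_nonneg)
    have "d n \<le> \<sigma>\<^sup>2 / 2 * (Gm \<sigma> (- pub_ll_all_plus \<sigma> n) / (1 - Gm \<sigma> 0))"
      unfolding d_def by (intro mult_left_mono Dp_bounds(2)[OF assms(1) l]) simp
    also have "\<dots> \<le> \<sigma>\<^sup>2 / 2 * (exp ((1 - (v n)\<^sup>2) / (2 * \<sigma>\<^sup>2)) / (1 - Gm \<sigma> 0))"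
      unfolding v_def using Gm_tail_le[OF assms(1) l] Gm0
      by (intro mult_left_mono divide_right_mono) simp_all
    also have "\<dots> = M * exp (- r * (v n)\<^sup>2)"
      unfolding M_def r_def by (simp add: exp_add[symmetric] diff_divide_distrib)
    finally show ?thesis .
  qed
  have "\<exists>B\<ge>0. \<forall>n. exp (\<beta> * r * (v n)\<^sup>2) \<le> exp (\<beta> * r * (v 0)\<^sup>2) + B * real n"
  proof (rule exp_square_linear_growth)
    show "r > 0" "M \<ge> 0"
      unfolding r_def M_def using assms(1) Gm0 by simp_all
    show "v (Suc n) = v n + d n" "0 \<le> d n" for n
      unfolding v_def d_def using Dp_bounds(1)[OF assms(1) pub_ll_all_plus_nonneg[OF assms(1)]]
      by (simp_all add: algebra_simps)
  qed (use assms d_le in simp_all)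
  then show ?thesis
    unfolding r_def v_def by simp
qed

lemma Gp_ge_exp_square:
  assumes "\<sigma> > 0" "l \<ge> 0" "\<gamma> > 0"
  shows "exp (- 9 * (1 + 1 / \<gamma>) / (2 * \<sigma>\<^sup>2)) / sqrt (2 * pi * \<sigma>\<^sup>2)
           * exp (- ((1 + \<gamma>) / (2 * \<sigma>\<^sup>2) * (\<sigma>\<^sup>2 * l / 2 - 1)\<^sup>2)) \<le> Gp \<sigma> (-l)"
proof -
  have "(\<sigma>\<^sup>2 * l / 2 + 2)\<^sup>2 = (\<sigma>\<^sup>2 * l / 2 - 1 + 3)\<^sup>2"
    by (simp add: algebra_simps)
  also have "\<dots> \<le> (1 + \<gamma>) * (\<sigma>\<^sup>2 * l / 2 - 1)\<^sup>2 + (1 + 1 / \<gamma>) * 3\<^sup>2"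
    by (rule square_add_le[OF assms(3)])
  finally have "(\<sigma>\<^sup>2 * l / 2 + 2)\<^sup>2 \<le> 9 * (1 + 1 / \<gamma>) + (1 + \<gamma>) * (\<sigma>\<^sup>2 * l / 2 - 1)\<^sup>2"
    by simp
  then have "- (9 * (1 + 1 / \<gamma>) + (1 + \<gamma>) * (\<sigma>\<^sup>2 * l / 2 - 1)\<^sup>2) / (2 * \<sigma>\<^sup>2)
      \<le> - (\<sigma>\<^sup>2 * l / 2 + 2)\<^sup>2 / (2 * \<sigma>\<^sup>2)"
    by (intro divide_right_mono) simp_all
  moreover have "- 9 * (1 + 1 / \<gamma>) / (2 * \<sigma>\<^sup>2) + - ((1 + \<gamma>) / (2 * \<sigma>\<^sup>2) * (\<sigma>\<^sup>2 * l / 2 - 1)\<^sup>2)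
      = - (9 * (1 + 1 / \<gamma>) + (1 + \<gamma>) * (\<sigma>\<^sup>2 * l / 2 - 1)\<^sup>2) / (2 * \<sigma>\<^sup>2)"
    using assms(1) by (simp add: field_simps)
  ultimately have "exp (- 9 * (1 + 1 / \<gamma>) / (2 * \<sigma>\<^sup>2)) * exp (- ((1 + \<gamma>) / (2 * \<sigma>\<^sup>2) * (\<sigma>\<^sup>2 * l / 2 - 1)\<^sup>2))
      \<le> exp (- (\<sigma>\<^sup>2 * l / 2 + 2)\<^sup>2 / (2 * \<sigma>\<^sup>2))"
    unfolding exp_add[symmetric] by simp
  then show ?thesis
    unfolding times_divide_eq_left
    by (intro order_trans[OF _ Gp_tail_ge[OF assms(1,2)]] divide_right_mono) simp_all
qed

lemma Gp_pub_ll_all_plus_lower: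
  assumes "\<sigma> > 0" "\<epsilon> > 0"
  shows "\<exists>k>0. \<forall>n. k / real (Suc n) powr (1 + \<epsilon>) < Gp \<sigma> (- pub_ll_all_plus \<sigma> n)"
proof -
  define \<gamma> where "\<gamma> = \<epsilon> / 2"
  define \<beta> where "\<beta> = (1 + \<gamma>) / (1 + \<epsilon>)"
  define Z where "Z = exp (- 9 * (1 + 1 / \<gamma>) / (2 * \<sigma>\<^sup>2)) / sqrt (2 * pi * \<sigma>\<^sup>2)"
  define W where "W = exp (\<beta> / (2 * \<sigma>\<^sup>2))"
  define v where "v n = \<sigma>\<^sup>2 * pub_ll_all_plus \<sigma> n / 2 - 1" for n
  have \<gamma>: "\<gamma> > 0" and \<beta>: "0 < \<beta>" "\<beta> < 1"
    unfolding \<gamma>_def \<beta>_def using assms(2) by (simp_all add: field_simps)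
  have Z: "Z > 0"
    unfolding Z_def using assms(1) by simp
  have W: "W \<ge> 1"
    unfolding W_def using assms(1) \<beta> by simp
  obtain B where B: "B \<ge> 0" "\<And>n. exp (\<beta> / (2 * \<sigma>\<^sup>2) * (v n)\<^sup>2) \<le> W + B * real n"
    using pub_ll_all_plus_potential[OF assms(1) \<beta>] unfolding v_def W_def by blast
  define k where "k = Z / (W + B) powr (1 + \<epsilon>) / 2"
  have "k / real (Suc n) powr (1 + \<epsilon>) < Gp \<sigma> (- pub_ll_all_plus \<sigma> n)" for n
  proof -
    have "exp ((1 + \<gamma>) / (2 * \<sigma>\<^sup>2) * (v n)\<^sup>2) = exp (\<beta> / (2 * \<sigma>\<^sup>2) * (v n)\<^sup>2) powr (1 + \<epsilon>)"
      unfolding \<beta>_def using assms(2) by (simp add: powr_def)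
    also have "\<dots> \<le> ((W + B) * real (Suc n)) powr (1 + \<epsilon>)"
    proof (rule powr_mono2)
      have "W + B * real n \<le> (W + B) * real (Suc n)"
        using B(1) W by (simp add: algebra_simps)
      then show "exp (\<beta> / (2 * \<sigma>\<^sup>2) * (v n)\<^sup>2) \<le> (W + B) * real (Suc n)"
        using B(2)[of n] by linarith
    qed (use assms(2) in simp_all)
    also have "\<dots> = (W + B) powr (1 + \<epsilon>) * real (Suc n) powr (1 + \<epsilon>)"
      using B W by (simp add: powr_mult)
    finally have growth: "exp ((1 + \<gamma>) / (2 * \<sigma>\<^sup>2) * (v n)\<^sup>2)
        \<le> (W + B) powr (1 + \<epsilon>) * real (Suc n) powr (1 + \<epsilon>)" .
    have "k / real (Suc n) powr (1 + \<epsilon>) < Z / ((W + B) powr (1 + \<epsilon>) * real (Suc n) powr (1 + \<epsilon>))"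
      unfolding k_def using Z B W by (simp add: field_simps)
    also have "\<dots> \<le> Z / exp ((1 + \<gamma>) / (2 * \<sigma>\<^sup>2) * (v n)\<^sup>2)"
      using growth Z B W by (intro divide_left_mono) (simp_all add: add_pos_nonneg)
    also have "\<dots> = Z * exp (- ((1 + \<gamma>) / (2 * \<sigma>\<^sup>2) * (v n)\<^sup>2))"
      by (simp only: exp_minus divide_inverse)
    also have "\<dots> \<le> Gp \<sigma> (- pub_ll_all_plus \<sigma> n)"
      unfolding Z_def v_def by (rule Gp_ge_exp_square[OF assms(1) pub_ll_all_plus_nonneg[OF assms(1)] \<gamma>])
    finally show ?thesis .
  qed
  moreover have "k > 0"
    unfolding k_def using Z B W by (simp add: add_pos_nonneg)
  ultimately show ?thesis by blast
qed

section \<open>The conditional probability of a first \<open>-1\<close>\<close>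

lemma pub_ll_eq_pub_ll_all_plus:
  assumes "t \<ge> 1" "\<forall>\<tau>\<in>{1..<t}. action \<sigma> \<omega> \<tau> = 1"
  shows "pub_ll \<sigma> \<omega> t = pub_ll_all_plus \<sigma> (t - 1)"
  using assms
proof (induction t rule: nat_induct_at_least)
  case (Suc t)
  then have "pub_ll \<sigma> \<omega> t = pub_ll_all_plus \<sigma> (t - 1)" and "action \<sigma> \<omega> t = 1"
    by auto
  moreover obtain n where "t = Suc n"
    using Suc.hyps by (cases t) auto
  ultimately show ?case
    by (simp add: action_def Let_def split: if_splits)
qed simp

lemma all_actions_plus_iff:
  "(\<forall>\<tau>\<in>{1..<t}. action \<sigma> \<omega> \<tau> = 1) \<longleftrightarrow> (\<forall>\<tau>\<in>{1..<t}. - pub_ll_all_plus \<sigma> (\<tau> - 1) < Llr \<sigma> (\<omega> \<tau>))"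
proof (induction t)
  case (Suc t)
  have step: "action \<sigma> \<omega> t = 1 \<longleftrightarrow> - pub_ll_all_plus \<sigma> (t - 1) < Llr \<sigma> (\<omega> t)"
    if "t \<ge> 1" "\<forall>\<tau>\<in>{1..<t}. action \<sigma> \<omega> \<tau> = 1"
    using pub_ll_eq_pub_ll_all_plus[OF that] by (auto simp: action_def)
  have "{1..<Suc t} = (if t = 0 then {} else insert t {1..<t})"
    by auto
  with Suc.IH step show ?case
    by auto
qed simp

lemma measure_Pplus_Collect:
  assumes "\<sigma> > 0" "finite J" "\<And>i. i \<in> J \<Longrightarrow> X i \<in> sets borel"
  shows "measure (Pplus \<sigma>) {\<omega> \<in> space (Pplus \<sigma>). \<forall>i\<in>J. \<omega> i \<in> X i} = (\<Prod>i\<in>J. measure (sig_dist 1 \<sigma>) (X i))"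
proof -
  interpret S: prob_space "sig_dist 1 \<sigma>"
    using assms(1) by (rule prob_space_sig_dist)
  interpret P: product_prob_space "\<lambda>_. sig_dist 1 \<sigma>" UNIV
    by unfold_locales
  have "emeasure (Pplus \<sigma>) {\<omega> \<in> space (Pplus \<sigma>). \<forall>i\<in>J. \<omega> i \<in> X i} = (\<Prod>i\<in>J. emeasure (sig_dist 1 \<sigma>) (X i))"
    unfolding Pplus_def using assms(2,3) by (intro P.emeasure_PiM_Collect) auto
  then show ?thesis
    unfolding Pplus_def by (simp add: S.emeasure_eq_measure P.emeasure_eq_measure prod_ennreal prod_nonneg)
qed

lemma cond_prob_first_minus_eq:
  assumes "\<sigma> > 0" "t \<ge> 1"
  shows "cond_prob_first_minus \<sigma> t = Gp \<sigma> (- pub_ll_all_plus \<sigma> (t - 1))"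
proof -
  interpret prob_space "sig_dist 1 \<sigma>"
    using assms(1) by (rule prob_space_sig_dist)
  define thr where "thr \<tau> = - pub_ll_all_plus \<sigma> (\<tau> - 1)" for \<tau>
  define X where "X \<tau> = (if \<tau> = t then {s. Llr \<sigma> s \<le> thr \<tau>} else {s. thr \<tau> < Llr \<sigma> s})" for \<tau>
  have Llr_le_borel: "{s. Llr \<sigma> s \<le> x} \<in> sets borel" for x
    using assms(1) by (simp add: Llr_le_iff atMost_def[symmetric])
  have X_borel: "X \<tau> \<in> sets borel" for \<tau>
    using Llr_le_borel[of "thr \<tau>"] sets.compl_sets[OF Llr_le_borel[of "thr \<tau>"]]
    by (auto simp: X_def not_le[symmetric] set_diff_eq)
  have plus_iff: "(\<forall>\<tau>\<in>{1..<t}. action \<sigma> \<omega> \<tau> = 1) \<longleftrightarrow> (\<forall>\<tau>\<in>{1..<t}. \<omega> \<tau> \<in> X \<tau>)" for \<omega>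
    unfolding all_actions_plus_iff X_def thr_def by auto
  have minus_iff: "action \<sigma> \<omega> t = -1 \<longleftrightarrow> \<omega> t \<in> X t" if "\<forall>\<tau>\<in>{1..<t}. action \<sigma> \<omega> \<tau> = 1" for \<omega>
    using pub_ll_eq_pub_ll_all_plus[OF assms(2) that] by (auto simp: action_def X_def thr_def)
  have num_eq: "{\<omega> \<in> space (Pplus \<sigma>). action \<sigma> \<omega> t = -1 \<and> (\<forall>\<tau>\<in>{1..<t}. action \<sigma> \<omega> \<tau> = 1)}
      = {\<omega> \<in> space (Pplus \<sigma>). \<forall>\<tau>\<in>insert t {1..<t}. \<omega> \<tau> \<in> X \<tau>}"
    using plus_iff minus_iff by auto
  have den_eq: "{\<omega> \<in> space (Pplus \<sigma>). \<forall>\<tau>\<in>{1..<t}. action \<sigma> \<omega> \<tau> = 1}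
      = {\<omega> \<in> space (Pplus \<sigma>). \<forall>\<tau>\<in>{1..<t}. \<omega> \<tau> \<in> X \<tau>}"
    using plus_iff by auto
  have "measure (sig_dist 1 \<sigma>) (X \<tau>) \<noteq> 0" if "\<tau> \<in> {1..<t}" for \<tau>
  proof -
    have "Gp \<sigma> (thr \<tau>) \<le> Gm \<sigma> 0"
      using Gp_le_Gm[of \<sigma> "thr \<tau>"] Gm_mono[of \<sigma> "thr \<tau>" 0] assms(1) pub_ll_all_plus_nonneg[OF assms(1)]
      by (simp add: thr_def)
    moreover have "X \<tau> = space (sig_dist 1 \<sigma>) - {s. Llr \<sigma> s \<le> thr \<tau>}"
      using that by (auto simp: X_def)
    then have "measure (sig_dist 1 \<sigma>) (X \<tau>) = 1 - Gp \<sigma> (thr \<tau>)"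
      using prob_compl[of "{s. Llr \<sigma> s \<le> thr \<tau>}"] Llr_le_borel by (simp add: Gp_def)
    ultimately show ?thesis
      using Gm_zero_less_one[OF assms(1)] by simp
  qed
  then have den_pos: "(\<Prod>\<tau>\<in>{1..<t}. measure (sig_dist 1 \<sigma>) (X \<tau>)) \<noteq> 0"
    by (simp add: prod_zero_iff)
  have "measure (sig_dist 1 \<sigma>) (X t) = Gp \<sigma> (thr t)"
    by (simp add: X_def Gp_def)
  then have num: "measure (Pplus \<sigma>) {\<omega> \<in> space (Pplus \<sigma>). \<forall>\<tau>\<in>insert t {1..<t}. \<omega> \<tau> \<in> X \<tau>}
      = Gp \<sigma> (thr t) * (\<Prod>\<tau>\<in>{1..<t}. measure (sig_dist 1 \<sigma>) (X \<tau>))"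
    using X_borel by (subst measure_Pplus_Collect[OF assms(1)]) auto
  have den: "measure (Pplus \<sigma>) {\<omega> \<in> space (Pplus \<sigma>). \<forall>\<tau>\<in>{1..<t}. \<omega> \<tau> \<in> X \<tau>}
      = (\<Prod>\<tau>\<in>{1..<t}. measure (sig_dist 1 \<sigma>) (X \<tau>))"
    using assms(1) X_borel by (simp add: measure_Pplus_Collect)
  show ?thesis
    unfolding cond_prob_first_minus_def num_eq den_eq num den
    using den_pos by (simp add: thr_def)
qed

theorem lemma7:
  fixes \<sigma> :: real
  assumes "\<sigma> > 0"
  shows "\<forall>\<epsilon>>0. \<exists>k>0. \<forall>t::nat. t \<ge> 1 \<longrightarrow>
           cond_prob_first_minus \<sigma> t > k / (real t) powr (1 + \<epsilon>)"
proof (intro allI impI)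
  fix \<epsilon> :: real
  assume "\<epsilon> > 0"
  then obtain k where "k > 0" and k: "\<And>n. k / real (Suc n) powr (1 + \<epsilon>) < Gp \<sigma> (- pub_ll_all_plus \<sigma> n)"
    using Gp_pub_ll_all_plus_lower[OF assms] by blast
  have "cond_prob_first_minus \<sigma> t > k / real t powr (1 + \<epsilon>)" if "t \<ge> 1" for t :: nat
    using k[of "t - 1"] cond_prob_first_minus_eq[OF assms that] that by simp
  with \<open>k > 0\<close> show "\<exists>k>0. \<forall>t::nat. t \<ge> 1 \<longrightarrow> cond_prob_first_minus \<sigma> t > k / (real t) powr (1 + \<epsilon>)"
    by blast
qed

end
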